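(* Let $p$ be a prime number, let $G\simeq C_2\oplus C_{2p}$, and let $f$ be an automorphism of $\mathcal{P}_{0}(G)$ with trivial pullback. Then $f$ is the identity.
   Context: For an additively written finite abelian group $G$, $\mathcal{P}_{0}(G)$ is the monoid of all subsets of $G$ containing $0$, with setwise addition and identity $\{0\}$. An automorphism $f$ of $\mathcal{P}_0(G)$ has trivial pullback if $f(\{0,a\})=\{0,a\}$ for all $a\in G$. $C_n$ denotes the cyclic group of order $n$. *)

theory Defs
  imports Main "HOL-Computational_Algebra.Primes"
begin

definition P0 :: "'a::ab_group_add set set" where
  "P0 = {A. (0::'a) \<in> A}"

definition setadd :: "'a::ab_group_add set \<Rightarrow> 'a set \<Rightarrow> 'a set" where
  "setadd A B = {a + b | a b. a \<in> A \<and> b \<in> B}"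

definition P0_automorphism :: "('a::ab_group_add set \<Rightarrow> 'a set) \<Rightarrow> bool" where
  "P0_automorphism f \<longleftrightarrow>
     bij_betw f P0 P0 \<and>
     (\<forall>A\<in>P0. \<forall>B\<in>P0. f (setadd A B) = setadd (f A) (f B)) \<and>
     f {0} = {0}"

definition trivial_pullback :: "('a::ab_group_add set \<Rightarrow> 'a set) \<Rightarrow> bool" where
  "trivial_pullback f \<longleftrightarrow> (\<forall>a::'a. f {0, a} = {0, a})"

definition iso_to_CmCn :: "nat \<Rightarrow> nat \<Rightarrow> ('a::ab_group_add \<Rightarrow> nat \<times> nat) \<Rightarrow> bool" where
  "iso_to_CmCn m n h \<longleftrightarrow>
     bij_betw h UNIV ({0..<m} \<times> {0..<n}) \<and>
     (\<forall>x y. h (x + y) = ((fst (h x) + fst (h y)) mod m, (snd (h x) + snd (h y)) mod n))"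

end

(*
  Since A + {0, a} = A \<union> (A + a), an automorphism f with trivial pullback satisfies
  f (A \<union> (A + a)) = f A \<union> (f A + a). Hence f preserves the stabilizer H of A, fixes
  subgroups and G, and maps complements of H-cosets to complements of H-cosets.
  We show f A = A by downward induction on |A|. If A is not the complement of an H-coset,
  the strictly larger sets A \<union> (A + a), a \<notin> H, are fixed, and this pins f A down to A.
  If A = G - (x + H) and f A = G - (y + H) with x - y \<notin> H, then, unless x + H and y + H
  are distinct involutions of G/H, {0, y} is a summand of A or {0, x} is a summand of f A;
  as f fixes {0, a}, this forces y \<in> f A or x \<in> A, which is false.
  In the involution case with H = 0, an element of order > 2 yields a four-element summand
  of G - {x} containing y. For H \<noteq> 0, the sets (A - {y}) \<union> (A - {y} + c), c \<notin> H, are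
  fixed, which forces f (A - {y}) = f A. Here C_2 \<oplus> C_2p enters: such a set of the same
  size as A is not of the exceptional kind, because all involutions c for which G/<c>
  contains a Klein four-group coincide.
*)

theory Submission
  imports Defs
begin

section \<open>Translates and stabilizers\<close>

definition translate :: "'a::ab_group_add \<Rightarrow> 'a set \<Rightarrow> 'a set" where
  "translate c A = (\<lambda>b. b + c) ` A"

definition stabilizer :: "'a::ab_group_add set \<Rightarrow> 'a set" where
  "stabilizer A = {a. \<forall>b\<in>A. b + a \<in> A}"

lemma mem_translate: "z \<in> translate c A \<longleftrightarrow> z - c \<in> A"
  unfolding translate_def by (auto simp: image_iff) (metis diff_add_cancel)

lemma card_translate: "card (translate c A) = card A"
  unfolding translate_def by (rule card_image) (auto simp: inj_on_def)

lemma setadd_mem: "a \<in> A \<Longrightarrow> b \<in> B \<Longrightarrow> a + b \<in> setadd A B"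
  unfolding setadd_def by blast

lemma zero_mem_setadd: "0 \<in> A \<Longrightarrow> 0 \<in> B \<Longrightarrow> 0 \<in> setadd A B"
  using setadd_mem[of 0 A 0 B] by simp

lemma setadd_pair: "setadd A {0, a} = A \<union> translate a A"
  unfolding setadd_def translate_def by (auto; force)

lemma stabilizer_zero: "0 \<in> stabilizer A"
  unfolding stabilizer_def by simp

lemma stabilizer_mem: "a \<in> stabilizer A \<Longrightarrow> b \<in> A \<Longrightarrow> b + a \<in> A"
  unfolding stabilizer_def by blast

lemma stabilizer_add: "a \<in> stabilizer A \<Longrightarrow> b \<in> stabilizer A \<Longrightarrow> a + b \<in> stabilizer A"
  unfolding stabilizer_def by (simp flip: add.assoc)

lemma stabilizer_minus:
  assumes "finite A" and a: "a \<in> stabilizer A"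
  shows "- a \<in> stabilizer A"
proof -
  have "(\<lambda>b. b + a) ` A \<subseteq> A" using a by (auto simp: stabilizer_def)
  moreover have "card ((\<lambda>b. b + a) ` A) = card A" by (rule card_image) (auto simp: inj_on_def)
  ultimately have shift_eq: "(\<lambda>b. b + a) ` A = A" using \<open>finite A\<close> by (simp add: card_subset_eq)
  have "b + - a \<in> A" if "b \<in> A" for b
  proof -
    obtain b' where "b' \<in> A" "b = b' + a" using \<open>b \<in> A\<close> shift_eq by blast
    then show ?thesis by simp
  qed
  then show ?thesis unfolding stabilizer_def by blast
qed

lemma stabilizer_diff:
  "finite A \<Longrightarrow> a \<in> stabilizer A \<Longrightarrow> b \<in> stabilizer A \<Longrightarrow> a - b \<in> stabilizer A"
  using stabilizer_add[of a A "- b"] stabilizer_minus[of A b] by simp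

lemma union_translate_eq_iff: "A \<union> translate a A = A \<longleftrightarrow> a \<in> stabilizer A"
  unfolding stabilizer_def translate_def by auto

lemma stabilizer_eq_self:
  assumes "0 \<in> K" "\<And>a b. a \<in> K \<Longrightarrow> b \<in> K \<Longrightarrow> a + b \<in> K"
  shows "stabilizer K = K"
  unfolding stabilizer_def using assms by force

lemma stabilizer_stabilizer: "stabilizer (stabilizer A) = stabilizer A"
  by (rule stabilizer_eq_self[OF stabilizer_zero stabilizer_add])

lemma setadd_stabilizer_self: "setadd (stabilizer A) (stabilizer A) = stabilizer A"
proof
  show "setadd (stabilizer A) (stabilizer A) \<subseteq> stabilizer A"
    unfolding setadd_def using stabilizer_add by blast
  show "stabilizer A \<subseteq> setadd (stabilizer A) (stabilizer A)"
    using setadd_mem[OF _ stabilizer_zero] by force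
qed

lemma translate_stabilizer_eq:
  assumes "finite A" "x - y \<in> stabilizer A"
  shows "translate x (stabilizer A) = translate y (stabilizer A)"
proof -
  have "z - x \<in> stabilizer A \<longleftrightarrow> z - y \<in> stabilizer A" for z
    using stabilizer_add[OF _ assms(2), of "z - x"] stabilizer_diff[OF assms(1) _ assms(2), of "z - y"]
    by (auto simp: algebra_simps)
  then show ?thesis by (auto simp: mem_translate)
qed

lemma minus_mem_stabilizer_iff: "finite A \<Longrightarrow> - a \<in> stabilizer A \<longleftrightarrow> a \<in> stabilizer A"
  using stabilizer_minus[of A a] stabilizer_minus[of A "- a"] by auto

lemma eq_compl_translate_if_shifts_mem:
  assumes "finite A" "z \<notin> A" and shift: "\<And>a. a \<notin> stabilizer A \<Longrightarrow> z - a \<in> A"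
  shows "A = - translate z (stabilizer A)"
proof (intro set_eqI iffI)
  fix w assume "w \<in> A"
  have "w - z \<notin> stabilizer A"
  proof
    assume "w - z \<in> stabilizer A"
    then have "w + - (w - z) \<in> A"
      using stabilizer_mem \<open>w \<in> A\<close> minus_mem_stabilizer_iff[OF \<open>finite A\<close>] by blast
    then show False using \<open>z \<notin> A\<close> by simp
  qed
  then show "w \<in> - translate z (stabilizer A)" by (simp add: mem_translate)
next
  fix w assume "w \<in> - translate z (stabilizer A)"
  then have "- (z - w) \<notin> stabilizer A" by (simp add: mem_translate)
  then have "z - (z - w) \<in> A" using shift minus_mem_stabilizer_iff[OF \<open>finite A\<close>] by blast
  then show "w \<in> A" by simp
qed

lemma eq_UNIV_if_shifts_mem:
  assumes "finite A" "c \<in> A" and shift: "\<And>a. a \<notin> stabilizer A \<Longrightarrow> c - a \<in> A"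
  shows "A = UNIV"
proof -
  have "w \<in> A" for w
  proof (cases "w - c \<in> stabilizer A")
    case True
    then show ?thesis using stabilizer_mem[OF True \<open>c \<in> A\<close>] by simp
  next
    case False
    then have "- (c - w) \<notin> stabilizer A" by simp
    then have "c - (c - w) \<in> A" using shift minus_mem_stabilizer_iff[OF \<open>finite A\<close>] by blast
    then show ?thesis by simp
  qed
  then show ?thesis by blast
qed

lemma mem_compl_translate_iff:
  assumes "B = - translate x H"
  shows "z \<in> B \<longleftrightarrow> z - x \<notin> H"
proof -
  have "z \<in> B \<longleftrightarrow> z \<in> - translate x H" using assms by (rule arg_cong)
  then show ?thesis by (simp add: mem_translate)
qed

lemma compl_translate_union_translate:
  assumes "finite A" and A: "A = - translate x (stabilizer A)" and a: "a \<notin> stabilizer A"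
  shows "A \<union> translate a A = UNIV"
proof -
  note mem_A = mem_compl_translate_iff[OF A]
  have "z - a \<in> A" if "z \<notin> A" for z
  proof -
    have "z - x \<in> stabilizer A" using that mem_A by blast
    then have "(z - a) - x \<notin> stabilizer A"
      using stabilizer_diff[OF \<open>finite A\<close>, of "z - x" "z - a - x"] a by auto
    then show ?thesis using mem_A by blast
  qed
  then show ?thesis using mem_translate by blast
qed

lemma compl_translate_stabilizer_neq_UNIV: "A = - translate x (stabilizer A) \<Longrightarrow> A \<noteq> UNIV"
  using mem_translate[of x x "stabilizer A"] stabilizer_zero[of A] by auto

lemma card_compl_translate:
  assumes "finite (UNIV :: 'a::ab_group_add set)"
  shows "card (- translate x (H :: 'a set)) = card (UNIV :: 'a set) - card H"
proof -
  have "finite (translate x H)" using finite_subset[OF subset_UNIV assms] .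
  then show ?thesis by (simp add: Compl_eq_Diff_UNIV card_Diff_subset card_translate)
qed

lemma setadd_eq_if_covered:
  assumes "0 \<in> X" and cover: "\<And>g. g \<in> B \<Longrightarrow> \<exists>t\<in>X. translate (g - t) X \<subseteq> B"
  shows "setadd {c. translate c X \<subseteq> B} X = B"
proof
  show "setadd {c. translate c X \<subseteq> B} X \<subseteq> B"
    unfolding setadd_def translate_def by (auto simp: add.commute)
  show "B \<subseteq> setadd {c. translate c X \<subseteq> B} X"
  proof
    fix g assume "g \<in> B"
    then obtain t where "t \<in> X" "translate (g - t) X \<subseteq> B" using cover by blast
    then show "g \<in> setadd {c. translate c X \<subseteq> B} X"
      using setadd_mem[of "g - t" _ t X] by simp
  qed
qed

lemma compl_translate_eq_setadd_pair:
  assumes "finite A" "0 \<in> A" and A: "A = - translate x (stabilizer A)"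
    and yx: "y - x \<notin> stabilizer A" and yy: "y + y \<notin> stabilizer A"
  shows "\<exists>C. 0 \<in> C \<and> A = setadd C {0, y}"
proof (intro exI conjI)
  note mem_A = mem_compl_translate_iff[OF A]
  show "A = setadd {c. translate c {0, y} \<subseteq> A} {0, y}"
  proof (rule setadd_eq_if_covered[symmetric])
    fix g assume "g \<in> A"
    show "\<exists>t\<in>{0, y}. translate (g - t) {0, y} \<subseteq> A"
    proof (rule ccontr)
      assume "\<not> ?thesis"
      then have "g + y \<notin> A" "g - y \<notin> A"
        using \<open>g \<in> A\<close> by (auto simp: translate_def add.commute)
      then have "(g + y - x) - (g - y - x) \<in> stabilizer A"
        using mem_A stabilizer_diff[OF \<open>finite A\<close>] by blast
      then show False using yy by (simp add: algebra_simps)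
    qed
  qed simp
  have "y \<in> A" using yx mem_A by blast
  then show "0 \<in> {c. translate c {0, y} \<subseteq> A}"
    using \<open>0 \<in> A\<close> by (simp add: translate_def)
qed

lemma compl_singleton_eq_setadd:
  assumes "0 \<in> X" "x \<notin> X" "stabilizer X = {0}"
  shows "\<exists>C. 0 \<in> C \<and> - {x} = setadd C X"
proof (intro exI conjI)
  show "- {x} = setadd {c. translate c X \<subseteq> - {x}} X"
  proof (rule setadd_eq_if_covered[symmetric, OF \<open>0 \<in> X\<close>])
    fix g assume g: "g \<in> - {x}"
    show "\<exists>t\<in>X. translate (g - t) X \<subseteq> - {x}"
    proof (rule ccontr)
      assume "\<not> ?thesis"
      then have "x - g \<in> stabilizer X"
        unfolding stabilizer_def by (force simp: mem_translate algebra_simps)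
      then show False using g \<open>stabilizer X = {0}\<close> by simp
    qed
  qed
  show "0 \<in> {c. translate c X \<subseteq> - {x}}"
    using \<open>x \<notin> X\<close> by (auto simp: mem_translate)
qed

lemma setadd_pairs: "setadd {0, a} {0, b} = {0, a, b, a + b}"
  unfolding setadd_def by (auto; force)

lemma stabilizer_four_point_set:
  fixes a y :: "'a::ab_group_add"
  assumes aa: "a + a \<noteq> 0" and yy: "y + y = 0" and y0: "y \<noteq> 0"
  shows "stabilizer {0, a, y - a, y} = {0}"
proof -
  let ?X = "{0, a, y - a, y}"
  have ny: "- y = y" using yy by (simp add: add_eq_0_iff)
  have "a + y \<noteq> 0"
  proof
    assume "a + y = 0"
    then have "a = y" using ny by (simp add: add_eq_0_iff)
    then show False using aa yy by simp
  qed
  then have notin: "y + a \<notin> ?X" "- a \<notin> ?X"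
    using aa y0 ny by (auto simp: algebra_simps eq_neg_iff_add_eq_0 neg_eq_iff_add_eq_0)
  have "s = 0" if s: "s \<in> stabilizer ?X" for s
  proof -
    have shift: "b + s \<in> ?X" if "b \<in> ?X" for b by (rule stabilizer_mem[OF s that])
    have "s \<noteq> a" using shift[of y] notin(1) by auto
    moreover have "s \<noteq> y" using shift[of a] notin(1) by (auto simp: add.commute)
    moreover have "s \<noteq> y - a"
    proof
      assume "s = y - a"
      have "y + (y - a) = - a" using yy by (simp add: algebra_simps)
      then have "- a \<in> ?X" using shift[of y] \<open>s = y - a\<close> by (metis insertCI)
      with notin(2) show False by contradiction
    qed
    ultimately show "s = 0" using shift[of 0] by simp
  qed
  then show ?thesis using stabilizer_zero by blast
qed

lemma translate_zero_singleton [simp]: "translate x {0} = {x}"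
  unfolding translate_def by simp

lemma setadd_punctured_stabilizer:
  assumes "y \<in> A" "h \<in> stabilizer A" "h \<noteq> 0" "finite A"
  shows "setadd (A - {y}) (stabilizer A) = A"
proof
  show "setadd (A - {y}) (stabilizer A) \<subseteq> A"
    unfolding setadd_def using stabilizer_mem[of _ A] by auto
  show "A \<subseteq> setadd (A - {y}) (stabilizer A)"
  proof
    fix a assume "a \<in> A"
    show "a \<in> setadd (A - {y}) (stabilizer A)"
    proof (cases "a = y")
      case True
      have "y + h \<in> A - {y}" using stabilizer_mem[OF assms(2,1)] assms(3) by simp
      then have "(y + h) + - h \<in> setadd (A - {y}) (stabilizer A)"
        by (rule setadd_mem[OF _ stabilizer_minus[OF assms(4,2)]])
      then show ?thesis using True by simp
    next
      case False
      with \<open>a \<in> A\<close> have "a + 0 \<in> setadd (A - {y}) (stabilizer A)"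
        by (intro setadd_mem[OF _ stabilizer_zero]) simp
      then show ?thesis by simp
    qed
  qed
qed

text \<open>\<open>klein_pair H x y\<close>: \<open>x + H\<close> and \<open>y + H\<close> are distinct involutions of \<open>G/H\<close>.\<close>

definition klein_pair :: "'a::ab_group_add set \<Rightarrow> 'a \<Rightarrow> 'a \<Rightarrow> bool" where
  "klein_pair H x y \<longleftrightarrow> x \<notin> H \<and> y \<notin> H \<and> x - y \<notin> H \<and> x + x \<in> H \<and> y + y \<in> H"

definition exceptional :: "'a::ab_group_add set \<Rightarrow> bool" where
  "exceptional A \<longleftrightarrow>
     (\<exists>x y. A = - translate x (stabilizer A) \<and> klein_pair (stabilizer A) x y)"

definition exceptional_involution :: "'a::ab_group_add \<Rightarrow> bool" where
  "exceptional_involution c \<longleftrightarrow> c \<noteq> 0 \<and> c + c = 0 \<and> (\<exists>x y. klein_pair {0, c} x y)"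

lemma exceptionalI:
  "A = - translate x (stabilizer A) \<Longrightarrow> klein_pair (stabilizer A) x y \<Longrightarrow> exceptional A"
  unfolding exceptional_def by (intro exI conjI)

lemma exceptional_stabilizer_card_2:
  assumes "exceptional A" "card (stabilizer A) = 2"
  shows "\<exists>c. stabilizer A = {0, c} \<and> exceptional_involution c"
proof -
  obtain c where c: "stabilizer A = {0, c}" "c \<noteq> 0"
    using assms(2) stabilizer_zero[of A] by (metis card_2_iff insert_commute insertE singletonD)
  have "c + c \<in> stabilizer A" using stabilizer_add c by blast
  then have "c + c = 0" using c by auto
  moreover obtain x y where "klein_pair (stabilizer A) x y"
    using assms(1) unfolding exceptional_def by blast
  ultimately show ?thesis using c unfolding exceptional_involution_def by auto
qed

lemma compl_translate_punctured_union_translate: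
  assumes "finite A" and A: "A = - translate x (stabilizer A)" and c: "c \<notin> stabilizer A"
  shows "- {y, y + c} \<subseteq> (A - {y}) \<union> translate c (A - {y})"
proof
  fix z assume z: "z \<in> - {y, y + c}"
  show "z \<in> (A - {y}) \<union> translate c (A - {y})"
  proof (cases "z \<in> A")
    case True
    then show ?thesis using z by blast
  next
    case False
    have "z \<in> A \<union> translate c A"
      using compl_translate_union_translate[OF assms] by blast
    then have "z - c \<in> A"
      using False by (simp add: mem_translate)
    then show ?thesis using z by (auto simp: mem_translate)
  qed
qed

section \<open>Automorphisms of \<open>P\<^sub>0(G)\<close> with trivial pullback\<close>

locale trivial_pullback_automorphism =
  fixes f :: "'a::ab_group_add set \<Rightarrow> 'a set"
  assumes finite_group: "finite (UNIV :: 'a set)"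
    and automorphism: "P0_automorphism f"
    and pullback: "trivial_pullback f"
begin

lemma finite_set [simp]: "finite (A :: 'a set)"
  using finite_subset[OF subset_UNIV finite_group] .

lemma card_compl_translate_stabilizer:
  assumes "(A :: 'a set) = - translate x (stabilizer A)"
  shows "card A = card (UNIV :: 'a set) - card (stabilizer A)"
proof -
  have "card A = card (- translate x (stabilizer A))" using assms by (rule arg_cong)
  also have "\<dots> = card (UNIV :: 'a set) - card (stabilizer A)" by (rule card_compl_translate[OF finite_group])
  finally show ?thesis .
qed

lemma zero_mem_f: "0 \<in> A \<Longrightarrow> 0 \<in> f A"
  using automorphism unfolding P0_automorphism_def bij_betw_def P0_def by blast

lemma f_eqD: "0 \<in> A \<Longrightarrow> 0 \<in> B \<Longrightarrow> f A = f B \<Longrightarrow> A = B"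
  using automorphism unfolding P0_automorphism_def bij_betw_def inj_on_def P0_def by blast

lemma f_surjE:
  assumes "0 \<in> B"
  obtains A where "0 \<in> A" "f A = B"
proof -
  have "B \<in> f ` P0"
    using assms automorphism unfolding P0_automorphism_def bij_betw_def P0_def by simp
  then show ?thesis using that unfolding P0_def by blast
qed

lemma f_setadd: "0 \<in> A \<Longrightarrow> 0 \<in> B \<Longrightarrow> f (setadd A B) = setadd (f A) (f B)"
  using automorphism unfolding P0_automorphism_def P0_def by blast

lemma f_pair [simp]: "f {0, a} = {0, a}"
  using pullback unfolding trivial_pullback_def by blast

lemma f_union_translate: "0 \<in> A \<Longrightarrow> f (A \<union> translate a A) = f A \<union> translate a (f A)"
  using f_setadd[of A "{0, a}"] by (simp add: setadd_pair)

lemma stabilizer_f: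
  assumes "0 \<in> A"
  shows "stabilizer (f A) = stabilizer A"
proof -
  have "a \<in> stabilizer (f A) \<longleftrightarrow> a \<in> stabilizer A" for a
  proof -
    have "a \<in> stabilizer (f A) \<longleftrightarrow> f (A \<union> translate a A) = f A"
      by (simp add: f_union_translate[OF assms] union_translate_eq_iff)
    also have "\<dots> \<longleftrightarrow> A \<union> translate a A = A"
      using f_eqD[of "A \<union> translate a A" A] assms by auto
    finally show ?thesis by (simp add: union_translate_eq_iff)
  qed
  then show ?thesis by blast
qed

lemma f_UNIV: "f UNIV = UNIV"
proof -
  have "stabilizer (f UNIV) = UNIV"
    using stabilizer_f[of UNIV] by (simp add: stabilizer_def)
  then show ?thesis
    using stabilizer_mem[of _ "f UNIV" 0] zero_mem_f[of UNIV] by force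
qed

lemma f_stabilizer: "f (stabilizer A) = stabilizer A"
proof -
  let ?H = "stabilizer A"
  have "f ?H = f (setadd ?H ?H)" by (simp only: setadd_stabilizer_self)
  also have "\<dots> = setadd (f ?H) (f ?H)" by (rule f_setadd[OF stabilizer_zero stabilizer_zero])
  finally have idem: "f ?H = setadd (f ?H) (f ?H)" .
  have "a + b \<in> f ?H" if "a \<in> f ?H" "b \<in> f ?H" for a b
    by (subst idem) (rule setadd_mem[OF that])
  then have "f ?H = stabilizer (f ?H)"
    using stabilizer_eq_self[OF zero_mem_f[OF stabilizer_zero]] by metis
  also have "\<dots> = ?H" by (simp add: stabilizer_f[OF stabilizer_zero] stabilizer_stabilizer)
  finally show ?thesis .
qed

lemma f_compl_translate:
  assumes A0: "0 \<in> A" and A: "A = - translate x (stabilizer A)"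
  shows "\<exists>y. f A = - translate y (stabilizer A)"
proof -
  have "f A \<noteq> UNIV"
    using f_eqD[OF A0, of UNIV] f_UNIV compl_translate_stabilizer_neq_UNIV[OF A] by auto
  then obtain y where "y \<notin> f A" by blast
  moreover have "y - a \<in> f A" if "a \<notin> stabilizer (f A)" for a
  proof -
    have "a \<notin> stabilizer A" using that stabilizer_f[OF A0] by simp
    then have "A \<union> translate a A = UNIV" by (rule compl_translate_union_translate[OF finite_set A])
    then have "f (A \<union> translate a A) = UNIV" using f_UNIV by simp
    then have "f A \<union> translate a (f A) = UNIV" using f_union_translate[OF A0, of a] by simp
    then show ?thesis using \<open>y \<notin> f A\<close> mem_translate by blast
  qed
  ultimately have "f A = - translate y (stabilizer (f A))"
    by (rule eq_compl_translate_if_shifts_mem[OF finite_set])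
  then have "f A = - translate y (stabilizer A)" unfolding stabilizer_f[OF A0] .
  then show ?thesis ..
qed

lemma mem_f_setadd_pair:
  assumes "0 \<in> C"
  shows "y \<in> f (setadd C {0, y})"
proof -
  have "0 + y \<in> setadd (f C) {0, y}" by (rule setadd_mem[OF zero_mem_f[OF assms]]) simp
  then show ?thesis by (simp add: f_setadd[OF assms])
qed

lemma mem_if_f_eq_setadd_pair:
  assumes "0 \<in> A" "0 \<in> C" "f A = setadd C {0, y}"
  shows "y \<in> A"
proof -
  obtain D where D: "0 \<in> D" "f D = C" using f_surjE[OF \<open>0 \<in> C\<close>] .
  have "f A = f (setadd D {0, y})" by (simp add: assms(3) f_setadd D)
  then have "A = setadd D {0, y}" using f_eqD[OF assms(1) zero_mem_setadd[OF D(1)]] by simp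
  moreover have "0 + y \<in> setadd D {0, y}" by (rule setadd_mem[OF D(1)]) simp
  ultimately show ?thesis by simp
qed

lemma f_compl_translate_cases:
  assumes A0: "0 \<in> A" and A: "A = - translate x (stabilizer A)"
  shows "f A = A \<or> (\<exists>y. f A = - translate y (stabilizer A) \<and> klein_pair (stabilizer A) x y)"
proof -
  let ?H = "stabilizer A"
  obtain y where B: "f A = - translate y ?H" using f_compl_translate[OF A0 A] by blast
  have B': "f A = - translate y (stabilizer (f A))" unfolding stabilizer_f[OF A0] by (rule B)
  note mem_A = mem_compl_translate_iff[OF A]
  note mem_B = mem_compl_translate_iff[OF B]
  have "x \<notin> ?H" "y \<notin> ?H"
    using mem_A[of 0] mem_B[of 0] A0 zero_mem_f[OF A0] minus_mem_stabilizer_iff[OF finite_set]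
    by auto
  show ?thesis
  proof (cases "x - y \<in> ?H")
    case True
    have "f A = - translate x ?H" using B translate_stabilizer_eq[OF finite_set True] by simp
    from this A[symmetric] have "f A = A" by (rule trans)
    then show ?thesis ..
  next
    case False
    have "x + x \<in> ?H"
    proof (rule ccontr)
      assume "x + x \<notin> ?H"
      then obtain C where "0 \<in> C" "f A = setadd C {0, x}"
        using compl_translate_eq_setadd_pair[OF finite_set zero_mem_f[OF A0] B'] False
        by (auto simp: stabilizer_f[OF A0])
      then have "x \<in> A" by (rule mem_if_f_eq_setadd_pair[OF A0])
      then show False using mem_A[of x] stabilizer_zero[of A] by simp
    qed
    moreover have "y + y \<in> ?H"
    proof (rule ccontr)
      assume "y + y \<notin> ?H"
      moreover have "y - x \<notin> ?H"
        using False minus_mem_stabilizer_iff[of A "y - x"] by simp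
      ultimately obtain C where "0 \<in> C" "A = setadd C {0, y}"
        using compl_translate_eq_setadd_pair[OF finite_set A0 A] by blast
      then have "y \<in> f A" using mem_f_setadd_pair by simp
      then show False using mem_B[of y] stabilizer_zero[of A] by simp
    qed
    ultimately have "klein_pair ?H x y"
      using False \<open>x \<notin> ?H\<close> \<open>y \<notin> ?H\<close> unfolding klein_pair_def by blast
    then show ?thesis by (intro disjI2 exI[of _ y] conjI B)
  qed
qed

lemma fixed_if_not_compl_translate:
  assumes A0: "0 \<in> A" and not_compl: "\<nexists>x. A = - translate x (stabilizer A)"
    and larger_fixed: "\<And>C. 0 \<in> C \<Longrightarrow> card A < card C \<Longrightarrow> f C = C"
  shows "f A = A"
proof (cases "A = UNIV")
  case True
  then show ?thesis using f_UNIV by simp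
next
  case False
  let ?H = "stabilizer A"
  have union: "f A \<union> translate a (f A) = A \<union> translate a A" if "a \<notin> ?H" for a
  proof -
    have "A \<subset> A \<union> translate a A" using that union_translate_eq_iff by blast
    then have "card A < card (A \<union> translate a A)" by (rule psubset_card_mono[OF finite_set])
    then have "f (A \<union> translate a A) = A \<union> translate a A" using larger_fixed A0 by blast
    then show ?thesis using f_union_translate[OF A0] by simp
  qed
  have "f A \<subseteq> A"
  proof
    fix z assume "z \<in> f A"
    show "z \<in> A"
    proof (rule ccontr)
      assume "z \<notin> A"
      then have "z - a \<in> A" if "a \<notin> ?H" for a
        using union[OF that] \<open>z \<in> f A\<close> mem_translate by blast
      then have "A = - translate z ?H"
        using eq_compl_translate_if_shifts_mem[OF finite_set \<open>z \<notin> A\<close>] by blast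
      then show False using not_compl by blast
    qed
  qed
  moreover have "A \<subseteq> f A"
  proof
    fix c assume "c \<in> A"
    show "c \<in> f A"
    proof (rule ccontr)
      assume "c \<notin> f A"
      then have "c - a \<in> A" if "a \<notin> ?H" for a
        using union[OF that] \<open>c \<in> A\<close> \<open>f A \<subseteq> A\<close> mem_translate by blast
      then show False using eq_UNIV_if_shifts_mem[OF finite_set \<open>c \<in> A\<close>] False by blast
    qed
  qed
  ultimately show ?thesis by blast
qed

lemma fixed_if_not_exceptional:
  assumes A0: "0 \<in> A" and "\<not> exceptional A"
    and larger_fixed: "\<And>C. 0 \<in> C \<Longrightarrow> card A < card C \<Longrightarrow> f C = C"
  shows "f A = A"
proof (cases "\<exists>x. A = - translate x (stabilizer A)")
  case True
  then obtain x where A: "A = - translate x (stabilizer A)" by blast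
  have "\<not> klein_pair (stabilizer A) x y" for y
    using \<open>\<not> exceptional A\<close> exceptionalI[OF A] by blast
  then show ?thesis using f_compl_translate_cases[OF A0 A] by blast
next
  case False
  then show ?thesis using fixed_if_not_compl_translate[OF A0 _ larger_fixed] by blast
qed

end

text \<open>The two properties of \<open>C\<^sub>2 \<oplus> C\<^sub>2\<^sub>p\<close> that the proof uses.\<close>

locale admissible_trivial_pullback_automorphism = trivial_pullback_automorphism f
  for f :: "'a::ab_group_add set \<Rightarrow> 'a set" +
  assumes exists_non_involution: "\<exists>a :: 'a. a + a \<noteq> 0"
    and unique_exceptional_involution:
      "\<And>c d :: 'a. exceptional_involution c \<Longrightarrow> exceptional_involution d \<Longrightarrow> c = d"
begin

lemma f_compl_singleton_eq:
  assumes "x \<noteq> 0" "x + x = 0" "y + y = 0" and fx: "f (- {x}) = - {y}"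
  shows "y = x"
proof (rule ccontr)
  assume "y \<noteq> x"
  have "y \<noteq> 0" using zero_mem_f[of "- {x}"] assms(1) fx by auto
  obtain a :: 'a where "a + a \<noteq> 0" using exists_non_involution by blast
  let ?X = "{0, a, y - a, y}"
  have fX: "f ?X = ?X" using f_setadd[of "{0, a}" "{0, y - a}"] by (simp add: setadd_pairs)
  have "x \<noteq> a" using \<open>a + a \<noteq> 0\<close> assms(2) by auto
  moreover have "x \<noteq> y - a"
  proof
    assume "x = y - a"
    then have "a + a = (y + y) - (x + x)" by (simp add: algebra_simps)
    then show False using \<open>a + a \<noteq> 0\<close> assms(2,3) by simp
  qed
  ultimately have "x \<notin> ?X" using assms(1) \<open>y \<noteq> x\<close> by auto
  then obtain C where C: "0 \<in> C" "- {x} = setadd C ?X"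
    using compl_singleton_eq_setadd[of ?X x]
      stabilizer_four_point_set[OF \<open>a + a \<noteq> 0\<close> assms(3) \<open>y \<noteq> 0\<close>] by auto
  have "- {y} = f (setadd C ?X)" using fx C(2) by simp
  also have "\<dots> = setadd (f C) ?X" using f_setadd[OF C(1), of ?X] fX by simp
  finally have fx_eq: "- {y} = setadd (f C) ?X" .
  have "0 + y \<in> setadd (f C) ?X" by (rule setadd_mem[OF zero_mem_f[OF C(1)]]) simp
  then have "y \<in> - {y}" by (simp add: fx_eq)
  then show False by simp
qed

lemma exceptional_stabilizers_eq:
  assumes "exceptional (A :: 'a set)" "exceptional B" "card (stabilizer A) = 2" "card (stabilizer B) = 2"
  shows "stabilizer A = stabilizer B"
proof -
  obtain c d where "stabilizer A = {0, c}" "stabilizer B = {0, d}"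
    and "exceptional_involution c" "exceptional_involution d"
    using exceptional_stabilizer_card_2[OF assms(1,3)] exceptional_stabilizer_card_2[OF assms(2,4)]
    by blast
  moreover have "c = d" by (rule unique_exceptional_involution) fact+
  ultimately show ?thesis by simp
qed

lemma fixed_punctured_union_translate:
  assumes A0: "0 \<in> A" and exc: "exceptional A" and y: "y \<in> A" "y \<noteq> 0"
    and h: "h \<in> stabilizer A" "h \<noteq> 0" and c: "c \<notin> stabilizer A"
    and larger_fixed: "\<And>C. 0 \<in> C \<Longrightarrow> card A < card C \<Longrightarrow> f C = C"
  defines "U \<equiv> (A - {y}) \<union> translate c (A - {y})"
  shows "f U = U"
proof -
  let ?H = "stabilizer A"
  let ?n = "card (UNIV :: 'a set)"
  obtain x where A: "A = - translate x ?H" using exc unfolding exceptional_def by blast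
  have U0: "0 \<in> U" using A0 y unfolding U_def by blast
  have sub: "- {y, y + c} \<subseteq> U"
    unfolding U_def by (rule compl_translate_punctured_union_translate[OF finite_set A c])
  have "c \<noteq> 0" using c stabilizer_zero by metis
  then have card_sub: "card (- {y, y + c}) = ?n - 2"
    by (simp add: Compl_eq_Diff_UNIV card_Diff_subset)
  have "card {0, h} \<le> card ?H" using h stabilizer_zero[of A] by (intro card_mono) auto
  then have "2 \<le> card ?H" using h by simp
  moreover have "card A = ?n - card ?H" by (rule card_compl_translate_stabilizer[OF A])
  moreover have "?n - 2 \<le> card U" using card_mono[OF finite_set sub] card_sub by simp
  moreover have "card ?H \<le> ?n" by (simp add: card_mono)
  ultimately consider "card A < card U" | "card ?H = 2" "card U = card A" by arith
  then show ?thesis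
  proof cases
    case 1
    then show ?thesis using larger_fixed U0 by blast
  next
    case 2
    have "card (- {y, y + c}) = card U" using card_sub 2 \<open>card A = ?n - card ?H\<close> by simp
    with sub have U: "- {y, y + c} = U" by (rule card_subset_eq[OF finite_set])
    have "\<not> exceptional U"
    proof
      assume exc_U: "exceptional U"
      then obtain x' where "U = - translate x' (stabilizer U)" unfolding exceptional_def by blast
      then have "card U = ?n - card (stabilizer U)" by (rule card_compl_translate_stabilizer)
      moreover have "card (stabilizer U) \<le> ?n" by (simp add: card_mono)
      ultimately have "card (stabilizer U) = 2"
        using 2 \<open>card A = ?n - card ?H\<close> \<open>card ?H \<le> ?n\<close> by arith
      then have "stabilizer U = ?H" using exceptional_stabilizers_eq[OF exc_U exc] 2 by simp
      then have "- h \<in> stabilizer U" using stabilizer_minus[OF finite_set h(1)] by simp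
      moreover have "y + h \<in> U"
        using stabilizer_mem[OF h(1) y(1)] h(2) unfolding U_def by simp
      ultimately have "(y + h) + - h \<in> U" by (rule stabilizer_mem)
      then show False by (simp flip: U)
    qed
    show ?thesis
      by (rule fixed_if_not_exceptional[OF U0 \<open>\<not> exceptional U\<close>]) (use larger_fixed 2 in simp)
  qed
qed

lemma image_removed_point_not_mem:
  assumes A0: "0 \<in> A" and exc: "exceptional A" and nontrivial: "stabilizer A \<noteq> {0}"
    and B: "f A = - translate y (stabilizer A)"
    and larger_fixed: "\<And>C. 0 \<in> C \<Longrightarrow> card A < card C \<Longrightarrow> f C = C"
  shows "y \<notin> A"
proof
  assume "y \<in> A"
  let ?H = "stabilizer A"
  let ?D = "A - {y}"
  obtain h where h: "h \<in> ?H" "h \<noteq> 0" using nontrivial stabilizer_zero[of A] by blast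
  note mem_B = mem_compl_translate_iff[OF B]
  have "y \<noteq> 0" using mem_B[of 0] zero_mem_f[OF A0] stabilizer_zero[of A] by auto
  then have D0: "0 \<in> ?D" using A0 by blast
  have "f A = f (setadd ?D ?H)" using setadd_punctured_stabilizer[OF \<open>y \<in> A\<close> h finite_set] by simp
  also have "\<dots> = setadd (f ?D) ?H" using f_setadd[OF D0 stabilizer_zero[of A]] f_stabilizer by simp
  finally have fA: "f A = setadd (f ?D) ?H" .
  have fD_sub: "f ?D \<subseteq> f A"
  proof
    fix e assume "e \<in> f ?D"
    then have "e + 0 \<in> setadd (f ?D) ?H" by (rule setadd_mem[OF _ stabilizer_zero])
    then show "e \<in> f A" by (simp add: fA)
  qed
  have "y + h \<notin> f A" using mem_B h(1) by simp
  have "y + h \<in> ?D" using stabilizer_mem[OF h(1) \<open>y \<in> A\<close>] h(2) by simp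
  have "f A \<subseteq> f ?D"
  proof
    fix z assume "z \<in> f A"
    have "(y + h) - z \<notin> ?H"
    proof
      assume "(y + h) - z \<in> ?H"
      then have "h - ((y + h) - z) \<in> ?H" using stabilizer_diff[OF finite_set h(1)] by blast
      moreover have "h - ((y + h) - z) = z - y" by (simp add: algebra_simps)
      ultimately show False using \<open>z \<in> f A\<close> mem_B by simp
    qed
    then have "f (?D \<union> translate ((y + h) - z) ?D) = ?D \<union> translate ((y + h) - z) ?D"
      by (rule fixed_punctured_union_translate[OF A0 exc \<open>y \<in> A\<close> \<open>y \<noteq> 0\<close> h _ larger_fixed])
    then have "y + h \<in> f ?D \<union> translate ((y + h) - z) (f ?D)"
      using f_union_translate[OF D0] \<open>y + h \<in> ?D\<close> by simp
    then show "z \<in> f ?D"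
      using fD_sub \<open>y + h \<notin> f A\<close> by (auto simp: mem_translate)
  qed
  then have "?D = A" using f_eqD[OF D0 A0] fD_sub by blast
  then show False using \<open>y \<in> A\<close> by blast
qed

lemma fixed_if_exceptional:
  assumes A0: "0 \<in> A" and exc: "exceptional A"
    and larger_fixed: "\<And>C. 0 \<in> C \<Longrightarrow> card A < card C \<Longrightarrow> f C = C"
  shows "f A = A"
proof -
  let ?H = "stabilizer A"
  obtain x where A: "A = - translate x ?H" using exc unfolding exceptional_def by blast
  show ?thesis
  proof (rule disjE[OF f_compl_translate_cases[OF A0 A]])
    assume "\<exists>y. f A = - translate y ?H \<and> klein_pair ?H x y"
    then obtain y where B: "f A = - translate y ?H" and klein: "klein_pair ?H x y" by blast
    have "x - y \<in> ?H"
    proof (cases "?H = {0}")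
      case True
      have "A = - {x}" using A unfolding True translate_zero_singleton .
      moreover have "f A = - {y}" using B unfolding True translate_zero_singleton .
      ultimately have "f (- {x}) = - {y}" by simp
      then have "y = x"
        by (rule f_compl_singleton_eq[rotated 3]) (use klein True in \<open>auto simp: klein_pair_def\<close>)
      then show ?thesis using stabilizer_zero by simp
    next
      case False
      then have "y \<notin> A" by (rule image_removed_point_not_mem[OF A0 exc _ B larger_fixed])
      then show ?thesis
        using mem_compl_translate_iff[OF A] minus_mem_stabilizer_iff[of A "x - y"] by simp
    qed
    then show ?thesis using klein unfolding klein_pair_def by blast
  qed
qed

theorem fixed: "0 \<in> A \<Longrightarrow> f A = A"
proof (induction "card (UNIV :: 'a set) - card A" arbitrary: A rule: less_induct)
  case less
  have larger_fixed: "f C = C" if "0 \<in> C" "card A < card C" for C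
  proof -
    have "card C \<le> card (UNIV :: 'a set)" by (simp add: card_mono)
    then show ?thesis using less.hyps[of C] that by simp
  qed
  show ?case
    using fixed_if_exceptional[OF less.prems _ larger_fixed]
      fixed_if_not_exceptional[OF less.prems _ larger_fixed] by blast
qed

end

section \<open>The group \<open>C\<^sub>2 \<oplus> C\<^sub>2\<^sub>p\<close>\<close>

lemma double_mod_eq_self:
  fixes u m :: nat
  assumes "u < m" "(u + u) mod m = u"
  shows "u = 0"
proof (cases "u + u < m")
  case True
  then show ?thesis using assms(2) by simp
next
  case False
  then have "(u + u) mod m = u + u - m" using assms(1) by (simp add: le_mod_geq)
  then show ?thesis using assms by linarith
qed

lemma double_mod_eq_zero:
  fixes c p :: nat
  assumes "c < 2 * p" "(c + c) mod (2 * p) = 0"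
  shows "c = 0 \<or> c = p"
proof -
  have "2 * p dvd 2 * c" using assms(2) by (simp add: mult_2 mod_eq_0_iff_dvd)
  then obtain k where "c = p * k" by auto
  moreover from this have "k < 2" using assms(1) by (cases "p = 0") auto
  ultimately show ?thesis by (auto simp: less_2_cases_iff)
qed

text \<open>The 2-torsion of \<open>C\<^sub>2 \<oplus> C\<^sub>2\<^sub>p\<close> is \<open>{0,1} \<times> {0,p}\<close>, of order 4, so two of its elements
  and their sum cannot all avoid \<open>{0, (1,q)}\<close>.\<close>

lemma C2_C2p_two_torsion_sum:
  fixes p x1 x2 y1 y2 q :: nat
  assumes "2 \<le> p" "x1 < 2" "y1 < 2" "x2 \<in> {0, p}" "y2 \<in> {0, p}" "q \<in> {0, p}"
    and "(x1, x2) \<notin> {(0, 0), (1, q)}" "(y1, y2) \<notin> {(0, 0), (1, q)}"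
    and "((x1 + y1) mod 2, (x2 + y2) mod (2 * p)) \<notin> {(0, 0), (1, q)}"
  shows False
proof -
  have "(p + p) mod (2 * p) = 0" "p mod (2 * p) = p" using assms(1) by (simp_all add: mult_2)
  moreover have "x1 = 0 \<or> x1 = 1" "y1 = 0 \<or> y1 = 1" using assms(2,3) by auto
  ultimately show False using assms(4-9) by auto
qed

context
  fixes m n :: nat and h :: "'a::ab_group_add \<Rightarrow> nat \<times> nat"
  assumes iso: "iso_to_CmCn m n h"
begin

lemma iso_to_CmCn_add: "h (x + y) = ((fst (h x) + fst (h y)) mod m, (snd (h x) + snd (h y)) mod n)"
  using iso unfolding iso_to_CmCn_def by blast

lemma iso_to_CmCn_bounded: "fst (h x) < m" "snd (h x) < n"
proof -
  have "h x \<in> {0..<m} \<times> {0..<n}" using iso unfolding iso_to_CmCn_def by (meson UNIV_I bij_betwE)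
  then show "fst (h x) < m" "snd (h x) < n" by auto
qed

lemma iso_to_CmCn_eq_iff: "h x = h y \<longleftrightarrow> x = y"
  using iso unfolding iso_to_CmCn_def bij_betw_def inj_on_def by blast

lemma iso_to_CmCn_surj:
  assumes "u < m" "v < n"
  shows "\<exists>x. h x = (u, v)"
proof -
  have "(u, v) \<in> range h" using assms iso unfolding iso_to_CmCn_def bij_betw_def by auto
  then show ?thesis by auto
qed

lemma iso_to_CmCn_finite: "finite (UNIV :: 'a set)"
  using bij_betw_finite iso unfolding iso_to_CmCn_def by blast

lemma iso_to_CmCn_zero: "h 0 = (0, 0)"
proof -
  obtain a b where hab: "h 0 = (a, b)" by fastforce
  then have "(a + a) mod m = a" "(b + b) mod n = b" using iso_to_CmCn_add[of 0 0] by simp_all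
  moreover have "a < m" "b < n" using iso_to_CmCn_bounded[of 0] hab by simp_all
  ultimately have "a = 0" "b = 0" by (simp_all add: double_mod_eq_self)
  then show ?thesis using hab by simp
qed

end

lemma C2_C2p_exists_non_involution:
  fixes h :: "'a::ab_group_add \<Rightarrow> nat \<times> nat"
  assumes "2 \<le> p" "iso_to_CmCn 2 (2 * p) h"
  shows "\<exists>a :: 'a. a + a \<noteq> 0"
proof -
  obtain a where a: "h a = (0, 1)" using iso_to_CmCn_surj[OF assms(2)] assms(1) by fastforce
  have "snd (h (a + a)) = 2" using iso_to_CmCn_add[OF assms(2), of a a] a assms(1) by simp
  then have "h (a + a) \<noteq> h 0" using iso_to_CmCn_zero[OF assms(2)] by auto
  then show ?thesis by (intro exI[of _ a]) auto
qed

lemma C2_C2p_exceptional_involution: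
  fixes h :: "'a::ab_group_add \<Rightarrow> nat \<times> nat"
  assumes p: "2 \<le> p" and iso: "iso_to_CmCn 2 (2 * p) h" and c: "exceptional_involution c"
  shows "h c = (0, p)"
proof -
  note add = iso_to_CmCn_add[OF iso] and bounded = iso_to_CmCn_bounded[OF iso]
    and zero = iso_to_CmCn_zero[OF iso] and eq_iff = iso_to_CmCn_eq_iff[OF iso]
  have snd_involution: "snd (h z) \<in> {0, p}" if "z + z = 0" for z
  proof -
    have "(snd (h z) + snd (h z)) mod (2 * p) = 0" using add[of z z] that zero by simp
    then show ?thesis using double_mod_eq_zero[OF bounded(2)] by simp
  qed
  obtain x y where "c \<noteq> 0" "c + c = 0" and klein: "klein_pair {0, c} x y"
    using c unfolding exceptional_involution_def by blast
  have "fst (h c) = 0"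
  proof (rule ccontr)
    assume "fst (h c) \<noteq> 0"
    then have fst_c: "fst (h c) = 1" using bounded(1)[of c] by linarith
    have involution: "z + z = 0" if "z + z \<in> {0, c}" for z
    proof -
      have "fst (h (z + z)) = 0" using add[of z z] by (simp add: add_self_mod_2 flip: mult_2)
      then show ?thesis using that fst_c by auto
    qed
    then have "x + x = 0" "y + y = 0" using klein unfolding klein_pair_def by auto
    then have "x - y = x + y" by (metis add_eq_0_iff diff_conv_add_uminus)
    moreover have "x \<notin> {0, c}" "y \<notin> {0, c}" "x - y \<notin> {0, c}"
      using klein unfolding klein_pair_def by simp_all
    ultimately have "x \<notin> {0, c}" "y \<notin> {0, c}" "x + y \<notin> {0, c}" by metis+
    then have "h x \<notin> {h 0, h c}" "h y \<notin> {h 0, h c}" "h (x + y) \<notin> {h 0, h c}"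
      by (simp_all add: eq_iff)
    moreover obtain q where hc: "h c = (1, q)" using fst_c by (metis prod.collapse)
    ultimately have "(fst (h x), snd (h x)) \<notin> {(0, 0), (1, q)}"
      and "(fst (h y), snd (h y)) \<notin> {(0, 0), (1, q)}"
      and "((fst (h x) + fst (h y)) mod 2, (snd (h x) + snd (h y)) mod (2 * p)) \<notin> {(0, 0), (1, q)}"
      unfolding zero hc add by simp_all
    moreover have "q \<in> {0, p}" using snd_involution[OF \<open>c + c = 0\<close>] hc by simp
    ultimately show False
      by (intro C2_C2p_two_torsion_sum[OF p bounded(1)[of x] bounded(1)[of y]
          snd_involution[OF \<open>x + x = 0\<close>] snd_involution[OF \<open>y + y = 0\<close>]])
  qed
  moreover have "h c \<noteq> (0, 0)" using \<open>c \<noteq> 0\<close> zero eq_iff by metis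
  ultimately show ?thesis using snd_involution[OF \<open>c + c = 0\<close>] by (auto simp: prod_eq_iff)
qed

theorem lemma3p6:
  fixes p :: nat and f :: "'a::ab_group_add set \<Rightarrow> 'a set"
  assumes "prime p"
    and "\<exists>h::'a \<Rightarrow> nat \<times> nat. iso_to_CmCn 2 (2 * p) h"
    and "P0_automorphism f"
    and "trivial_pullback f"
  shows "\<forall>A\<in>P0. f A = A"
proof -
  obtain h :: "'a \<Rightarrow> nat \<times> nat" where h: "iso_to_CmCn 2 (2 * p) h" using assms(2) by blast
  have "2 \<le> p" using prime_ge_2_nat[OF assms(1)] .
  interpret admissible_trivial_pullback_automorphism f
  proof
    show "finite (UNIV :: 'a set)" by (rule iso_to_CmCn_finite[OF h])
    show "P0_automorphism f" "trivial_pullback f" by fact+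
    show "\<exists>a :: 'a. a + a \<noteq> 0" by (rule C2_C2p_exists_non_involution[OF \<open>2 \<le> p\<close> h])
    show "c = d" if "exceptional_involution c" "exceptional_involution d" for c d :: 'a
      using C2_C2p_exceptional_involution[OF \<open>2 \<le> p\<close> h] that iso_to_CmCn_eq_iff[OF h] by metis
  qed
  show ?thesis using fixed unfolding P0_def by blast
qed

end
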